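(* Every pseudospectral SBP operator has the eigenvalue property: if $D_+,D_-$ form a pair of SBP operators of order $q=n$ on $[a,b]$ with associated data $H,S,\mathbf{p}_0,\mathbf{p}_n,\mathbf{x}$ (where $\mathbf{x}\in\mathbb{R}^{n+1}$), then every eigenvalue of $\tilde D_+ = D_+ + H^{-1}\mathbf{p}_0\mathbf{p}_0^\top$ has strictly positive real part.
   Context: Let $[a,b]$ be an interval with $b>a$ and $n\ge 1$. For $\mathbf{x}\in\mathbb{R}^{n+1}$, $\mathbf{x}^j$ denotes elementwise exponentiation, with $\mathbf{x}^0=\mathbf{1}=(1,\dots,1)^\top$. Matrices $D_+, D_-\in\mathbb{R}^{(n+1)\times(n+1)}$ form a pair of SBP (summation-by-parts) operators of order $q\ge 1$ on $[a,b]$ if there exist matrices $H,S\in\mathbb{R}^{(n+1)\times(n+1)}$ and vectors $\mathbf{p}_0,\mathbf{p}_n,\mathbf{x}\in\mathbb{R}^{n+1}$ such that: (A) $D_\pm \mathbf{x}^j = j\mathbf{x}^{j-1}$, $\mathbf{p}_0^\top\mathbf{x}^j = a^j$, $\mathbf{p}_n^\top \mathbf{x}^j = b^j$ for $j=0,\dots,q$ (with $0\cdot\mathbf{x}^{-1}:=\mathbf{0}$); (B) $H=H^\top$ is positive definite; (C) $HD_+ + D_+^\top H = -\mathbf{p}_0\mathbf{p}_0^\top + \mathbf{p}_n\mathbf{p}_n^\top + S$ with $S=S^\top$ positive semidefinite; (D) $HD_+ + D_-^\top H = -\mathbf{p}_0\mathbf{p}_0^\top + \mathbf{p}_n\mathbf{p}_n^\top$;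 (E) $\mathbf{x}=(x_0,\dots,x_n)^\top$ with $x_i\ne x_j$ for $i\ne j$. A pseudospectral SBP operator is a pair of SBP operators of order $q=n$ (i.e. the order equals the number of nodes minus one). The SBP operator has the eigenvalue property if every eigenvalue of $\tilde D_+ := D_+ + H^{-1}\mathbf{p}_0\mathbf{p}_0^\top$ has strictly positive real part. *)

theory Defs
  imports Complex_Main "Jordan_Normal_Form.Matrix" "Jordan_Normal_Form.Char_Poly"
begin

definition vpow :: "real vec \<Rightarrow> nat \<Rightarrow> real vec" where
  "vpow x j = vec (dim_vec x) (\<lambda>i. (x $ i) ^ j)"

definition outer :: "real vec \<Rightarrow> real vec \<Rightarrow> real mat" where
  "outer p q = mat (dim_vec p) (dim_vec q) (\<lambda>(i,j). p $ i * q $ j)"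

definition pos_def_mat :: "real mat \<Rightarrow> bool" where
  "pos_def_mat H \<longleftrightarrow> H\<^sup>T = H \<and>
     (\<forall>v \<in> carrier_vec (dim_row H). v \<noteq> 0\<^sub>v (dim_row H) \<longrightarrow> v \<bullet> (H *\<^sub>v v) > 0)"

definition pos_semidef_mat :: "real mat \<Rightarrow> bool" where
  "pos_semidef_mat S \<longleftrightarrow> S\<^sup>T = S \<and>
     (\<forall>v \<in> carrier_vec (dim_row S). v \<bullet> (S *\<^sub>v v) \<ge> 0)"

text \<open>Matrix inverse (meaningful for invertible square matrices).\<close>
definition mat_inv :: "real mat \<Rightarrow> real mat" where
  "mat_inv H = (SOME B. B \<in> carrier_mat (dim_row H) (dim_row H) \<and>
                        H * B = 1\<^sub>m (dim_row H) \<and> B * H = 1\<^sub>m (dim_row H))"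

definition sbp_pair ::
  "nat \<Rightarrow> nat \<Rightarrow> real \<Rightarrow> real \<Rightarrow> real mat \<Rightarrow> real mat \<Rightarrow> real mat \<Rightarrow> real mat
   \<Rightarrow> real vec \<Rightarrow> real vec \<Rightarrow> real vec \<Rightarrow> bool" where
  "sbp_pair n q a b Dp Dm H S p0 pn x \<longleftrightarrow>
     Dp \<in> carrier_mat (n+1) (n+1) \<and> Dm \<in> carrier_mat (n+1) (n+1) \<and>
     H \<in> carrier_mat (n+1) (n+1) \<and> S \<in> carrier_mat (n+1) (n+1) \<and>
     p0 \<in> carrier_vec (n+1) \<and> pn \<in> carrier_vec (n+1) \<and> x \<in> carrier_vec (n+1) \<and>
     \<comment> \<open>(A) exactness\<close>
     (\<forall>j \<le> q.
        Dp *\<^sub>v vpow x j = (if j = 0 then 0\<^sub>v (n+1) else of_nat j \<cdot>\<^sub>v vpow x (j - 1)) \<and>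
        Dm *\<^sub>v vpow x j = (if j = 0 then 0\<^sub>v (n+1) else of_nat j \<cdot>\<^sub>v vpow x (j - 1)) \<and>
        p0 \<bullet> vpow x j = a ^ j \<and> pn \<bullet> vpow x j = b ^ j) \<and>
     \<comment> \<open>(B)\<close>
     pos_def_mat H \<and>
     \<comment> \<open>(C)\<close>
     H * Dp + Dp\<^sup>T * H = - outer p0 p0 + outer pn pn + S \<and> pos_semidef_mat S \<and>
     \<comment> \<open>(D)\<close>
     H * Dp + Dm\<^sup>T * H = - outer p0 p0 + outer pn pn \<and>
     \<comment> \<open>(E)\<close>
     (\<forall>i < n+1. \<forall>j < n+1. i \<noteq> j \<longrightarrow> x $ i \<noteq> x $ j)"

definition Dtilde :: "real mat \<Rightarrow> real mat \<Rightarrow> real vec \<Rightarrow> real mat" where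
  "Dtilde Dp H p0 = Dp + mat_inv H * outer p0 p0"

definition eigenvalue_property :: "real mat \<Rightarrow> real mat \<Rightarrow> real vec \<Rightarrow> bool" where
  "eigenvalue_property Dp H p0 \<longleftrightarrow>
     (\<forall>l::complex. eigenvalue (map_mat complex_of_real (Dtilde Dp H p0)) l \<longrightarrow> Re l > 0)"

end

theory Submission
  imports Defs
begin

(* Let lambda = alpha + i beta be an eigenvalue of Dtilde with eigenvector r + i s.  The SAT term
   H^-1 p0 p0^T flips the sign of the inflow term in the SBP energy identity, so that
   2 w^T H Dtilde w = (p0^T w)^2 + (pn^T w)^2 + w^T S w >= 0, while the eigen-equations give
   alpha (r^T H r + s^T H s) = r^T H Dtilde r + s^T H Dtilde s.  Hence alpha >= 0, and alpha = 0
   forces p0^T r = p0^T s = 0 and then D_+ r = -beta s, D_+ s = beta r.  As the order equals n,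
   every grid function is the nodal interpolant of a polynomial of degree <= n, on which D_+ is
   exact; so r, s come from polynomials p, q vanishing at a with p' = -beta q and q' = beta p,
   and p'' = -beta^2 p leaves only the zero solution. *)

lemma poly_eq_sum_atMost:
  fixes p :: "'a::comm_semiring_1 poly"
  assumes "degree p \<le> N"
  shows "poly p y = (\<Sum>j\<le>N. coeff p j * y ^ j)"
proof -
  have "poly p y = (\<Sum>j\<le>degree p. coeff p j * y ^ j)" by (rule poly_altdef)
  also have "\<dots> = (\<Sum>j\<le>N. coeff p j * y ^ j)"
    by (rule sum.mono_neutral_left) (use assms in \<open>auto intro: coeff_eq_0 le_degree\<close>)
  finally show ?thesis .
qed

lemma poly_pderiv_eq_sum_atMost:
  fixes p :: "'a::{comm_semiring_1,semiring_no_zero_divisors,semiring_char_0} poly"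
  assumes "degree p \<le> N"
  shows "poly (pderiv p) y = (\<Sum>j\<le>N. coeff p j * (if j = 0 then 0 else of_nat j * y ^ (j - 1)))"
proof (cases N)
  case 0
  then have "pderiv p = 0" using assms by (simp add: pderiv_eq_0_iff)
  then show ?thesis using 0 by simp
next
  case (Suc M)
  have "(\<Sum>j\<le>N. coeff p j * (if j = 0 then 0 else of_nat j * y ^ (j - 1)))
      = (\<Sum>j\<le>M. coeff p (Suc j) * (of_nat (Suc j) * y ^ j))"
    unfolding Suc by (subst sum.atMost_Suc_shift) simp
  also have "\<dots> = (\<Sum>j\<le>M. coeff (pderiv p) j * y ^ j)"
    by (simp add: coeff_pderiv mult_ac)
  also have "\<dots> = poly (pderiv p) y"
    by (rule poly_eq_sum_atMost[symmetric]) (use assms Suc in \<open>simp add: degree_pderiv\<close>)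
  finally show ?thesis ..
qed

lemma pderiv_rotation_eq_0:
  fixes p q :: "'a::field_char_0 poly"
  assumes p': "pderiv p = Polynomial.smult (- c) q" and q': "pderiv q = Polynomial.smult c p"
    and "poly p a = 0" and "poly q a = 0"
  shows "p = 0 \<and> q = 0"
proof (cases "c = 0")
  case True
  then obtain h k where "p = [:h:]" "q = [:k:]" using p' q' pderiv_iszero by force
  with assms show ?thesis by simp
next
  case False
  have "pderiv (pderiv p) = Polynomial.smult (- c * c) p"
    using p' q' by (simp add: pderiv_smult pderiv_minus)
  then have "degree (pderiv (pderiv p)) = degree p"
    using False by simp
  then have "degree p - 1 - 1 = degree p"
    by (simp only: degree_pderiv)
  then have "pderiv p = 0" by (simp add: pderiv_eq_0_iff)
  then have "q = 0" using p' False by simp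
  then show ?thesis using q' False by simp
qed

definition nodal_values :: "real vec \<Rightarrow> real poly \<Rightarrow> real vec" where
  "nodal_values x p = vec (dim_vec x) (\<lambda>i. poly p (x $ i))"

lemma nodal_values_smult: "nodal_values x (Polynomial.smult c p) = c \<cdot>\<^sub>v nodal_values x p"
  by (rule eq_vecI) (auto simp: nodal_values_def)

lemma nodal_values_0: "nodal_values x 0 = 0\<^sub>v (dim_vec x)"
  by (rule eq_vecI) (auto simp: nodal_values_def)

lemma scalar_prod_nodal_values:
  assumes u: "u \<in> carrier_vec (dim_vec x)" and p: "degree p \<le> N"
  shows "u \<bullet> nodal_values x p = (\<Sum>j\<le>N. coeff p j * (u \<bullet> vpow x j))"
proof -
  have "u \<bullet> nodal_values x p = (\<Sum>i<dim_vec x. u $ i * (\<Sum>j\<le>N. coeff p j * (x $ i) ^ j))"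
    using u by (simp add: scalar_prod_def nodal_values_def poly_eq_sum_atMost[OF p] lessThan_atLeast0)
  also have "\<dots> = (\<Sum>i<dim_vec x. \<Sum>j\<le>N. coeff p j * (u $ i * (x $ i) ^ j))"
    by (simp only: sum_distrib_left mult_ac)
  also have "\<dots> = (\<Sum>j\<le>N. \<Sum>i<dim_vec x. coeff p j * (u $ i * (x $ i) ^ j))"
    by (rule sum.swap)
  also have "\<dots> = (\<Sum>j\<le>N. coeff p j * (\<Sum>i<dim_vec x. u $ i * (x $ i) ^ j))"
    by (simp only: sum_distrib_left)
  also have "\<dots> = (\<Sum>j\<le>N. coeff p j * (u \<bullet> vpow x j))"
    using u by (simp add: scalar_prod_def vpow_def lessThan_atLeast0)
  finally show ?thesis .
qed

lemma scalar_prod_nodal_values_exact: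
  assumes "u \<in> carrier_vec (dim_vec x)" and "\<forall>j \<le> N. u \<bullet> vpow x j = a ^ j" and "degree p \<le> N"
  shows "u \<bullet> nodal_values x p = poly p a"
  using assms by (simp add: scalar_prod_nodal_values[OF assms(1,3)] poly_eq_sum_atMost[of p N a])

lemma nodal_values_inj:
  assumes x: "inj_on (\<lambda>i. x $ i) {..<dim_vec x}"
    and p: "degree p < dim_vec x" and q: "degree q < dim_vec x"
    and pq: "nodal_values x p = nodal_values x q"
  shows "p = q"
proof (rule ccontr)
  assume "p \<noteq> q"
  then have r: "p - q \<noteq> 0" by simp
  have "(\<lambda>i. x $ i) ` {..<dim_vec x} \<subseteq> {y. poly (p - q) y = 0}"
  proof
    fix y assume "y \<in> (\<lambda>i. x $ i) ` {..<dim_vec x}"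
    then obtain i where "i < dim_vec x" "y = x $ i" by auto
    moreover have "nodal_values x p $ i = nodal_values x q $ i" using pq by simp
    ultimately show "y \<in> {y. poly (p - q) y = 0}" by (simp add: nodal_values_def)
  qed
  then have "card ((\<lambda>i. x $ i) ` {..<dim_vec x}) \<le> card {y. poly (p - q) y = 0}"
    by (rule card_mono[OF poly_roots_finite[OF r]])
  then have "dim_vec x \<le> card {y. poly (p - q) y = 0}"
    by (simp add: card_image[OF x])
  also have "\<dots> \<le> degree (p - q)" by (rule card_poly_roots_bound[OF r])
  also have "\<dots> < dim_vec x" using p q degree_diff_le[of p "dim_vec x - 1" q] by linarith
  finally show False by simp
qed

definition lagrange_basis :: "real vec \<Rightarrow> nat \<Rightarrow> real poly" where
  "lagrange_basis x k = Polynomial.smult (1 / (\<Prod>i\<in>{..<dim_vec x} - {k}. x $ k - x $ i))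
     (\<Prod>i\<in>{..<dim_vec x} - {k}. [:- (x $ i), 1:])"

lemma degree_lagrange_basis:
  assumes "k < dim_vec x"
  shows "degree (lagrange_basis x k) < dim_vec x"
proof -
  have "degree (\<Prod>i\<in>{..<dim_vec x} - {k}. [:- (x $ i), 1:])
      \<le> (\<Sum>i\<in>{..<dim_vec x} - {k}. degree [:- (x $ i), 1:])"
    by (rule degree_prod_sum_le[unfolded o_def]) simp
  also have "\<dots> < dim_vec x" using assms by simp
  finally show ?thesis unfolding lagrange_basis_def by (meson degree_smult_le le_less_trans)
qed

lemma poly_lagrange_basis:
  assumes x: "inj_on (\<lambda>i. x $ i) {..<dim_vec x}" and k: "k < dim_vec x" and m: "m < dim_vec x"
  shows "poly (lagrange_basis x k) (x $ m) = (if m = k then 1 else 0)"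
proof (cases "m = k")
  case True
  have "(\<Prod>i\<in>{..<dim_vec x} - {k}. x $ k - x $ i) \<noteq> 0"
    using x k by (auto simp: prod_zero_iff inj_on_def)
  then show ?thesis using True by (simp add: lagrange_basis_def poly_prod)
next
  case False
  then have "(\<Prod>i\<in>{..<dim_vec x} - {k}. poly [:- (x $ i), 1:] (x $ m)) = 0"
    using m by auto
  then show ?thesis using False by (simp add: lagrange_basis_def poly_prod)
qed

lemma nodal_values_surj:
  assumes x: "inj_on (\<lambda>i. x $ i) {..<dim_vec x}" and "0 < dim_vec x"
    and w: "w \<in> carrier_vec (dim_vec x)"
  obtains p where "degree p < dim_vec x" and "w = nodal_values x p"
proof
  let ?p = "\<Sum>k<dim_vec x. Polynomial.smult (w $ k) (lagrange_basis x k)"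
  show "degree ?p < dim_vec x"
    by (rule degree_sum_less)
      (use degree_lagrange_basis assms(2) in \<open>auto intro: le_less_trans[OF degree_smult_le]\<close>)
  show "w = nodal_values x ?p"
  proof (rule eq_vecI)
    fix m assume "m < dim_vec (nodal_values x ?p)"
    then have m: "m < dim_vec x" by (simp add: nodal_values_def)
    have "poly ?p (x $ m) = (\<Sum>k<dim_vec x. w $ k * (if m = k then 1 else 0))"
      by (simp add: poly_sum poly_lagrange_basis[OF x _ m])
    also have "\<dots> = w $ m" using m by (subst sum.remove[of _ m]) auto
    finally show "w $ m = nodal_values x ?p $ m" using m by (simp add: nodal_values_def)
  qed (use w in \<open>simp add: nodal_values_def\<close>)
qed

lemma nodal_values_pderiv:
  assumes D: "D \<in> carrier_mat (dim_vec x) (dim_vec x)"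
    and exact: "\<forall>j \<le> N. D *\<^sub>v vpow x j =
      (if j = 0 then 0\<^sub>v (dim_vec x) else of_nat j \<cdot>\<^sub>v vpow x (j - 1))"
    and p: "degree p \<le> N"
  shows "D *\<^sub>v nodal_values x p = nodal_values x (pderiv p)"
proof (rule eq_vecI)
  fix i assume "i < dim_vec (nodal_values x (pderiv p))"
  then have i: "i < dim_vec x" by (simp add: nodal_values_def)
  have "(D *\<^sub>v nodal_values x p) $ i = (\<Sum>j\<le>N. coeff p j * (row D i \<bullet> vpow x j))"
    using D i by (simp add: scalar_prod_nodal_values[OF _ p])
  also have "\<dots> = (\<Sum>j\<le>N. coeff p j * (if j = 0 then 0 else of_nat j * (x $ i) ^ (j - 1)))"
  proof (rule sum.cong[OF refl])
    fix j assume j: "j \<in> {..N}"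
    have "row D i \<bullet> vpow x j = (D *\<^sub>v vpow x j) $ i" using D i by simp
    also have "\<dots> = (if j = 0 then 0 else of_nat j * (x $ i) ^ (j - 1))"
      using exact j i by (simp add: vpow_def)
    finally show "coeff p j * (row D i \<bullet> vpow x j) =
        coeff p j * (if j = 0 then 0 else of_nat j * (x $ i) ^ (j - 1))" by simp
  qed
  also have "\<dots> = nodal_values x (pderiv p) $ i"
    using i by (simp add: nodal_values_def poly_pderiv_eq_sum_atMost[OF p])
  finally show "(D *\<^sub>v nodal_values x p) $ i = nodal_values x (pderiv p) $ i" .
qed (use D in \<open>simp add: nodal_values_def\<close>)

lemma exact_rotation_eq_0:
  assumes D: "D \<in> carrier_mat (n+1) (n+1)" and x: "x \<in> carrier_vec (n+1)"
    and nodes: "inj_on (\<lambda>i. x $ i) {..<n+1}"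
    and exact: "\<forall>j \<le> n. D *\<^sub>v vpow x j =
      (if j = 0 then 0\<^sub>v (n+1) else of_nat j \<cdot>\<^sub>v vpow x (j - 1))"
    and p0: "p0 \<in> carrier_vec (n+1)" and boundary: "\<forall>j \<le> n. p0 \<bullet> vpow x j = a ^ j"
    and r: "r \<in> carrier_vec (n+1)" and s: "s \<in> carrier_vec (n+1)"
    and Dr: "D *\<^sub>v r = (- c) \<cdot>\<^sub>v s" and Ds: "D *\<^sub>v s = c \<cdot>\<^sub>v r"
    and r0: "p0 \<bullet> r = 0" and s0: "p0 \<bullet> s = 0"
  shows "r = 0\<^sub>v (n+1) \<and> s = 0\<^sub>v (n+1)"
proof -
  have dim: "dim_vec x = n+1" using x by simp
  have nodes': "inj_on (\<lambda>i. x $ i) {..<dim_vec x}" using nodes dim by simp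
  have exact': "\<forall>j \<le> n. D *\<^sub>v vpow x j =
      (if j = 0 then 0\<^sub>v (dim_vec x) else of_nat j \<cdot>\<^sub>v vpow x (j - 1))"
    using exact dim by simp
  obtain p where p: "degree p \<le> n" and rp: "r = nodal_values x p"
    using nodal_values_surj[OF nodes'] r by (auto simp: dim less_Suc_eq_le)
  obtain q where q: "degree q \<le> n" and sq: "s = nodal_values x q"
    using nodal_values_surj[OF nodes'] s by (auto simp: dim less_Suc_eq_le)
  have "nodal_values x (pderiv p) = nodal_values x (Polynomial.smult (- c) q)"
    using nodal_values_pderiv[of D x n p] nodal_values_smult[of x "- c" q] D exact' p Dr
    by (simp add: dim rp sq)
  then have "pderiv p = Polynomial.smult (- c) q"
    by (rule nodal_values_inj[OF nodes', rotated 2]) (use p q in \<open>simp_all add: dim degree_pderiv\<close>)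
  moreover have "nodal_values x (pderiv q) = nodal_values x (Polynomial.smult c p)"
    using nodal_values_pderiv[of D x n q] D exact' q Ds by (simp add: dim rp sq nodal_values_smult)
  then have "pderiv q = Polynomial.smult c p"
    by (rule nodal_values_inj[OF nodes', rotated 2]) (use p q in \<open>simp_all add: dim degree_pderiv\<close>)
  moreover have "poly p a = 0" "poly q a = 0"
    using r0 s0 scalar_prod_nodal_values_exact[of p0 x n a] p0 boundary p q
    by (simp_all add: dim rp sq)
  ultimately have "p = 0 \<and> q = 0" by (rule pderiv_rotation_eq_0)
  then show ?thesis using rp sq by (simp add: nodal_values_0 dim)
qed

lemma pos_def_mat_inverse:
  assumes H: "H \<in> carrier_mat m m" and pd: "pos_def_mat H"
  shows "mat_inv H \<in> carrier_mat m m" and "H * mat_inv H = 1\<^sub>m m"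
proof -
  have "det H \<noteq> 0"
  proof
    assume "det H = 0"
    then obtain v where "v \<in> carrier_vec m" "v \<noteq> 0\<^sub>v m" "H *\<^sub>v v = 0\<^sub>v m"
      using det_0_iff_vec_prod_zero[OF H] by blast
    then show False using pd H unfolding pos_def_mat_def by fastforce
  qed
  then obtain B where "B \<in> carrier_mat m m" "H * B = 1\<^sub>m m" "B * H = 1\<^sub>m m"
    using det_non_zero_imp_unit[OF H] unfolding Units_def by (auto simp: ring_mat_def)
  then have "\<exists>B. B \<in> carrier_mat (dim_row H) (dim_row H) \<and> H * B = 1\<^sub>m (dim_row H) \<and>
      B * H = 1\<^sub>m (dim_row H)"
    using H by auto
  from someI_ex[OF this] show "mat_inv H \<in> carrier_mat m m" and "H * mat_inv H = 1\<^sub>m m"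
    using H unfolding mat_inv_def by auto
qed

lemma pos_def_mat_sum_pos:
  assumes H: "H \<in> carrier_mat m m" and pd: "pos_def_mat H"
    and r: "r \<in> carrier_vec m" and s: "s \<in> carrier_vec m" and rs: "r \<noteq> 0\<^sub>v m \<or> s \<noteq> 0\<^sub>v m"
  shows "r \<bullet> (H *\<^sub>v r) + s \<bullet> (H *\<^sub>v s) > 0"
proof -
  have pos: "w \<bullet> (H *\<^sub>v w) > 0" if "w \<in> carrier_vec m" "w \<noteq> 0\<^sub>v m" for w
    using pd H that unfolding pos_def_mat_def by auto
  have "w \<bullet> (H *\<^sub>v w) \<ge> 0" if "w \<in> carrier_vec m" for w
    using pos[OF that] that H by (cases "w = 0\<^sub>v m") auto
  then show ?thesis using pos r s rs by (meson add_nonneg_pos add_pos_nonneg)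
qed

lemma outer_mult_vec:
  assumes "w \<in> carrier_vec (dim_vec q)"
  shows "outer p q *\<^sub>v w = (q \<bullet> w) \<cdot>\<^sub>v p"
  using assms by (auto intro!: eq_vecI simp: outer_def scalar_prod_def sum_distrib_left mult_ac)

lemma quadratic_form_transpose:
  fixes A :: "'a::comm_ring_1 mat"
  assumes "A \<in> carrier_mat m m" and "w \<in> carrier_vec m"
  shows "w \<bullet> (A\<^sup>T *\<^sub>v w) = w \<bullet> (A *\<^sub>v w)"
  using transpose_vec_mult_scalar[OF assms(1) assms(2) assms(2)]
    comm_scalar_prod[of w m "A\<^sup>T *\<^sub>v w"] assms
  by simp

lemma sbp_energy_identity:
  assumes H: "H \<in> carrier_mat m m" and D: "D \<in> carrier_mat m m" and S: "S \<in> carrier_mat m m"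
    and p0: "p0 \<in> carrier_vec m" and pn: "pn \<in> carrier_vec m" and w: "w \<in> carrier_vec m"
    and sym: "H\<^sup>T = H" and sbp: "H * D + D\<^sup>T * H = - outer p0 p0 + outer pn pn + S"
  shows "2 * (w \<bullet> (H *\<^sub>v (D *\<^sub>v w))) = - (p0 \<bullet> w)\<^sup>2 + (pn \<bullet> w)\<^sup>2 + w \<bullet> (S *\<^sub>v w)"
proof -
  let ?M = "H * D"
  have M: "?M \<in> carrier_mat m m" using H D by simp
  have "outer p0 p0 \<in> carrier_mat m m" "outer pn pn \<in> carrier_mat m m"
    using p0 pn by (auto simp: outer_def)
  then have boundary: "(- outer p0 p0 + outer pn pn + S) *\<^sub>v w
      = (- (p0 \<bullet> w)) \<cdot>\<^sub>v p0 + (pn \<bullet> w) \<cdot>\<^sub>v pn + S *\<^sub>v w"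
    using p0 pn S w by (auto intro!: eq_vecI simp: add_mult_distrib_mat_vec[of _ m m] outer_mult_vec)
  have "w \<bullet> ((?M + ?M\<^sup>T) *\<^sub>v w) = w \<bullet> (?M *\<^sub>v w) + w \<bullet> (?M\<^sup>T *\<^sub>v w)"
    using M w by (simp add: add_mult_distrib_mat_vec[of _ m m] scalar_prod_add_distrib[of _ m])
  then have "2 * (w \<bullet> (H *\<^sub>v (D *\<^sub>v w))) = w \<bullet> ((H * D + D\<^sup>T * H) *\<^sub>v w)"
    using quadratic_form_transpose[OF M w] H D w by (simp add: transpose_mult[OF H D] sym)
  also have "\<dots> = w \<bullet> ((- (p0 \<bullet> w)) \<cdot>\<^sub>v p0 + (pn \<bullet> w) \<cdot>\<^sub>v pn + S *\<^sub>v w)"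
    by (simp only: sbp boundary)
  also have "\<dots> = - (p0 \<bullet> w)\<^sup>2 + (pn \<bullet> w)\<^sup>2 + w \<bullet> (S *\<^sub>v w)"
    using p0 pn S w comm_scalar_prod[OF p0 w] comm_scalar_prod[OF pn w]
    by (simp add: scalar_prod_add_distrib[of _ m] power2_eq_square)
  finally show ?thesis .
qed

lemma Dtilde_carrier:
  assumes "D \<in> carrier_mat m m" and "H \<in> carrier_mat m m" and "pos_def_mat H"
    and "p0 \<in> carrier_vec m"
  shows "Dtilde D H p0 \<in> carrier_mat m m"
  using assms pos_def_mat_inverse(1)[of H m] by (simp add: Dtilde_def outer_def)

lemma Dtilde_mult_vec:
  assumes D: "D \<in> carrier_mat m m" and H: "H \<in> carrier_mat m m" and pd: "pos_def_mat H"
    and p0: "p0 \<in> carrier_vec m" and w: "w \<in> carrier_vec m"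
  shows "Dtilde D H p0 *\<^sub>v w = D *\<^sub>v w + (p0 \<bullet> w) \<cdot>\<^sub>v (mat_inv H *\<^sub>v p0)"
proof -
  have B: "mat_inv H \<in> carrier_mat m m" by (rule pos_def_mat_inverse(1)[OF H pd])
  have O: "outer p0 p0 \<in> carrier_mat m m" using p0 by (simp add: outer_def)
  show ?thesis
    using D B O p0 w
    by (simp add: Dtilde_def add_mult_distrib_mat_vec[of _ m m] assoc_mult_mat_vec[of _ m m]
        outer_mult_vec mult_mat_vec[of _ m m])
qed

lemma Dtilde_mult_vec_orthogonal:
  assumes D: "D \<in> carrier_mat m m" and H: "H \<in> carrier_mat m m" and pd: "pos_def_mat H"
    and p0: "p0 \<in> carrier_vec m" and w: "w \<in> carrier_vec m" and "p0 \<bullet> w = 0"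
  shows "Dtilde D H p0 *\<^sub>v w = D *\<^sub>v w"
  using Dtilde_mult_vec[OF D H pd p0 w] assms pos_def_mat_inverse(1)[OF H pd]
  by (intro eq_vecI) auto

lemma Dtilde_energy_identity:
  assumes H: "H \<in> carrier_mat m m" and D: "D \<in> carrier_mat m m" and S: "S \<in> carrier_mat m m"
    and p0: "p0 \<in> carrier_vec m" and pn: "pn \<in> carrier_vec m" and w: "w \<in> carrier_vec m"
    and pd: "pos_def_mat H" and sbp: "H * D + D\<^sup>T * H = - outer p0 p0 + outer pn pn + S"
  shows "2 * (w \<bullet> (H *\<^sub>v (Dtilde D H p0 *\<^sub>v w))) = (p0 \<bullet> w)\<^sup>2 + (pn \<bullet> w)\<^sup>2 + w \<bullet> (S *\<^sub>v w)"
proof -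
  have B: "mat_inv H \<in> carrier_mat m m" and HB: "H * mat_inv H = 1\<^sub>m m"
    using pos_def_mat_inverse[OF H pd] by auto
  have "H *\<^sub>v (mat_inv H *\<^sub>v p0) = p0"
    using assoc_mult_mat_vec[OF H B p0] HB p0 by simp
  then have "H *\<^sub>v (Dtilde D H p0 *\<^sub>v w) = H *\<^sub>v (D *\<^sub>v w) + (p0 \<bullet> w) \<cdot>\<^sub>v p0"
    using H D B p0 w
    by (simp add: Dtilde_mult_vec[OF D H pd p0 w] mult_add_distrib_mat_vec[of _ m m]
        mult_mat_vec[of _ m m])
  then have "w \<bullet> (H *\<^sub>v (Dtilde D H p0 *\<^sub>v w)) = w \<bullet> (H *\<^sub>v (D *\<^sub>v w)) + (p0 \<bullet> w)\<^sup>2"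
    using H D p0 w comm_scalar_prod[OF p0 w]
    by (simp add: scalar_prod_add_distrib[of _ m] power2_eq_square)
  moreover have "H\<^sup>T = H" using pd by (simp add: pos_def_mat_def)
  ultimately show ?thesis
    using sbp_energy_identity[OF H D S p0 pn w _ sbp] by simp
qed

lemma real_eigenvector:
  fixes A :: "real mat"
  assumes A: "A \<in> carrier_mat m m" and ev: "eigenvalue (map_mat complex_of_real A) l"
  obtains r s where "r \<in> carrier_vec m" and "s \<in> carrier_vec m" and "r \<noteq> 0\<^sub>v m \<or> s \<noteq> 0\<^sub>v m"
    and "A *\<^sub>v r = Re l \<cdot>\<^sub>v r - Im l \<cdot>\<^sub>v s" and "A *\<^sub>v s = Im l \<cdot>\<^sub>v r + Re l \<cdot>\<^sub>v s"
proof -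
  obtain v where v: "v \<in> carrier_vec m" and v0: "v \<noteq> 0\<^sub>v m"
    and Av: "map_mat complex_of_real A *\<^sub>v v = l \<cdot>\<^sub>v v"
    using ev A unfolding eigenvalue_def eigenvector_def by auto
  have re: "A *\<^sub>v map_vec Re v = map_vec Re (l \<cdot>\<^sub>v v)"
    and im: "A *\<^sub>v map_vec Im v = map_vec Im (l \<cdot>\<^sub>v v)"
    using A v Av[symmetric] by (auto intro!: eq_vecI simp: scalar_prod_def Re_sum Im_sum)
  have "map_vec Re v \<noteq> 0\<^sub>v m \<or> map_vec Im v \<noteq> 0\<^sub>v m"
  proof (rule ccontr)
    assume "\<not> ?thesis"
    then have "v $ i = 0" if "i < m" for i
      using that v by (metis complex_eqI index_map_vec index_zero_vec carrier_vecD zero_complex.sel)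
    then show False using v v0 by (auto intro: eq_vecI)
  qed
  then show thesis
    by (rule that[rotated 2]) (use v in \<open>auto intro!: eq_vecI simp: re im\<close>)
qed

lemma rotation_quadratic_form:
  fixes H A :: "real mat"
  assumes H: "H \<in> carrier_mat m m" and A: "A \<in> carrier_mat m m" and sym: "H\<^sup>T = H"
    and r: "r \<in> carrier_vec m" and s: "s \<in> carrier_vec m"
    and Ar: "A *\<^sub>v r = \<alpha> \<cdot>\<^sub>v r - \<beta> \<cdot>\<^sub>v s" and As: "A *\<^sub>v s = \<beta> \<cdot>\<^sub>v r + \<alpha> \<cdot>\<^sub>v s"
  shows "r \<bullet> (H *\<^sub>v (A *\<^sub>v r)) + s \<bullet> (H *\<^sub>v (A *\<^sub>v s)) = \<alpha> * (r \<bullet> (H *\<^sub>v r) + s \<bullet> (H *\<^sub>v s))"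
proof -
  have "r \<bullet> (H *\<^sub>v s) = s \<bullet> (H *\<^sub>v r)"
    using transpose_vec_mult_scalar[OF H s r] comm_scalar_prod[of "H *\<^sub>v r" m s] H r s sym by simp
  moreover have "r \<bullet> (H *\<^sub>v (A *\<^sub>v r)) = \<alpha> * (r \<bullet> (H *\<^sub>v r)) - \<beta> * (r \<bullet> (H *\<^sub>v s))"
    using H r s by (simp add: Ar mult_minus_distrib_mat_vec[of _ m m] scalar_prod_minus_distrib[of _ m]
        mult_mat_vec[of _ m m])
  moreover have "s \<bullet> (H *\<^sub>v (A *\<^sub>v s)) = \<beta> * (s \<bullet> (H *\<^sub>v r)) + \<alpha> * (s \<bullet> (H *\<^sub>v s))"
    using H r s by (simp add: As mult_add_distrib_mat_vec[of _ m m] scalar_prod_add_distrib[of _ m]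
        mult_mat_vec[of _ m m])
  ultimately show ?thesis by (simp add: algebra_simps)
qed

lemma sbp_Dtilde_rotation_rate_pos:
  assumes "sbp_pair n n a b Dp Dm H S p0 pn x"
    and r: "r \<in> carrier_vec (n+1)" and s: "s \<in> carrier_vec (n+1)"
    and rs: "r \<noteq> 0\<^sub>v (n+1) \<or> s \<noteq> 0\<^sub>v (n+1)"
    and Dr: "Dtilde Dp H p0 *\<^sub>v r = \<alpha> \<cdot>\<^sub>v r - \<beta> \<cdot>\<^sub>v s"
    and Ds: "Dtilde Dp H p0 *\<^sub>v s = \<beta> \<cdot>\<^sub>v r + \<alpha> \<cdot>\<^sub>v s"
  shows "\<alpha> > 0"
proof (rule ccontr)
  assume "\<not> \<alpha> > 0"
  note sbp = assms(1)[unfolded sbp_pair_def]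
  have D: "Dp \<in> carrier_mat (n+1) (n+1)" and H: "H \<in> carrier_mat (n+1) (n+1)"
    and S: "S \<in> carrier_mat (n+1) (n+1)" and p0: "p0 \<in> carrier_vec (n+1)"
    and pn: "pn \<in> carrier_vec (n+1)" and x: "x \<in> carrier_vec (n+1)"
    and pd: "pos_def_mat H" and psd: "pos_semidef_mat S"
    and energy: "H * Dp + Dp\<^sup>T * H = - outer p0 p0 + outer pn pn + S"
    and exact: "\<forall>j \<le> n. Dp *\<^sub>v vpow x j =
      (if j = 0 then 0\<^sub>v (n+1) else of_nat j \<cdot>\<^sub>v vpow x (j - 1))"
    and boundary: "\<forall>j \<le> n. p0 \<bullet> vpow x j = a ^ j"
    and distinct: "\<forall>i < n+1. \<forall>j < n+1. i \<noteq> j \<longrightarrow> x $ i \<noteq> x $ j"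
    using sbp by auto
  have nodes: "inj_on (\<lambda>i. x $ i) {..<n+1}"
    using distinct by (auto intro!: inj_onI)
  have boundary_energy: "2 * (w \<bullet> (H *\<^sub>v (Dtilde Dp H p0 *\<^sub>v w))) \<ge> (p0 \<bullet> w)\<^sup>2"
    if "w \<in> carrier_vec (n+1)" for w
    using Dtilde_energy_identity[OF H D S p0 pn that pd energy] psd S that
    by (simp add: pos_semidef_mat_def)
  have rotation: "r \<bullet> (H *\<^sub>v (Dtilde Dp H p0 *\<^sub>v r)) + s \<bullet> (H *\<^sub>v (Dtilde Dp H p0 *\<^sub>v s))
      = \<alpha> * (r \<bullet> (H *\<^sub>v r) + s \<bullet> (H *\<^sub>v s))"
    using pd by (intro rotation_quadratic_form[OF H Dtilde_carrier[OF D H pd p0] _ r s Dr Ds])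
      (simp add: pos_def_mat_def)
  have "r \<bullet> (H *\<^sub>v r) + s \<bullet> (H *\<^sub>v s) > 0" by (rule pos_def_mat_sum_pos[OF H pd r s rs])
  moreover have "\<alpha> * (r \<bullet> (H *\<^sub>v r) + s \<bullet> (H *\<^sub>v s)) \<ge> 0"
    using rotation boundary_energy[OF r] boundary_energy[OF s]
      zero_le_power2[of "p0 \<bullet> r"] zero_le_power2[of "p0 \<bullet> s"] by linarith
  ultimately have "\<alpha> = 0"
    using \<open>\<not> \<alpha> > 0\<close> by (simp add: zero_le_mult_iff)
  then have "(p0 \<bullet> r)\<^sup>2 + (p0 \<bullet> s)\<^sup>2 \<le> 0"
    using rotation boundary_energy[OF r] boundary_energy[OF s] by simp
  then have "p0 \<bullet> r = 0" and "p0 \<bullet> s = 0"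
    by (simp_all add: sum_power2_le_zero_iff)
  then have "Dp *\<^sub>v r = (- \<beta>) \<cdot>\<^sub>v s" and "Dp *\<^sub>v s = \<beta> \<cdot>\<^sub>v r"
    using Dr Ds \<open>\<alpha> = 0\<close> r s Dtilde_mult_vec_orthogonal[OF D H pd p0]
    by (auto intro!: eq_vecI)
  then have "r = 0\<^sub>v (n+1) \<and> s = 0\<^sub>v (n+1)"
    by (rule exact_rotation_eq_0[OF D x nodes exact p0 boundary r s])
      (use \<open>p0 \<bullet> r = 0\<close> \<open>p0 \<bullet> s = 0\<close> in simp_all)
  then show False using rs by simp
qed

theorem theorem3:
  fixes n :: nat and a b :: real and Dp Dm H S :: "real mat" and p0 pn x :: "real vec"
  assumes "n \<ge> 1" and "b > a"
    and "sbp_pair n n a b Dp Dm H S p0 pn x"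
  shows "eigenvalue_property Dp H p0"
  unfolding eigenvalue_property_def
proof (intro allI impI)
  fix l :: complex
  assume ev: "eigenvalue (map_mat complex_of_real (Dtilde Dp H p0)) l"
  have "Dtilde Dp H p0 \<in> carrier_mat (n+1) (n+1)"
    using assms(3) by (intro Dtilde_carrier) (auto simp: sbp_pair_def)
  then obtain r s where "r \<in> carrier_vec (n+1)" "s \<in> carrier_vec (n+1)"
    "r \<noteq> 0\<^sub>v (n+1) \<or> s \<noteq> 0\<^sub>v (n+1)"
    "Dtilde Dp H p0 *\<^sub>v r = Re l \<cdot>\<^sub>v r - Im l \<cdot>\<^sub>v s"
    "Dtilde Dp H p0 *\<^sub>v s = Im l \<cdot>\<^sub>v r + Re l \<cdot>\<^sub>v s"
    using ev by (rule real_eigenvector)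
  then show "Re l > 0" by (rule sbp_Dtilde_rotation_rate_pos[OF assms(3)])
qed

end
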